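(* Let $r\in\mathbb N_0$ and suppose Assumption (A1) holds with $k=0$. Then there is a constant $\kappa_r>0$, independent of $\tau_n$ and $n$, such that $$\sup_{t\in I_n}\|\varphi(t)\|\le\kappa_r\sum_{i=0}^r\Big\|\mathscr I_n\big[\varphi'(t)(1+T_n^{-1}(t))^i\big]+\delta_{0,i}\varphi(t_{n-1}^+)\Big\|\qquad\forall\varphi\in P_r(I_n,\mathbb R^d).$$
   Context: Mesh: $t_0<t_1<\dots<t_N$, $I_n=(t_{n-1},t_n]$, $\tau_n=t_n-t_{n-1}\le1$; $v(t_n^\pm)$ denote one-sided limits. $T_n(\hat t)=\frac{t_n+t_{n-1}}{2}+\frac{\tau_n}{2}\hat t$. $\|\cdot\|$ is the Euclidean norm on $\mathbb R^d$; $P_s$ denotes polynomials of degree at most $s$; $\delta_{i,j}$ is the Kronecker symbol. $\widehat{\mathscr I}$ is a linear functional (reference integrator) on $C^{k_{\mathscr I}}([-1,1])$ with local version $\mathscr I_n[\varphi]=\frac{\tau_n}{2}\widehat{\mathscr I}[\varphi\circ T_n]$, acting componentwise. Assumption (A1) for $k=0$: whenever $\hat\psi\in P_{r-1}([-1,1])$ satisfies $\widehat{\mathscr I}[(1+\hat t)\hat\psi\hat\varphi]=0$ for all $\hat\varphi\in P_{r-1}([-1,1])$, then $\hat\psi\equiv0$. *)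

theory Defs
  imports "HOL-Analysis.Analysis"
begin

definition Ck :: "nat \<Rightarrow> (real \<Rightarrow> real) set" where
  "Ck k = {f. \<exists>D. D 0 = f \<and>
      (\<forall>j<k. \<forall>x\<in>{-1..1}. (D j has_real_derivative D (Suc j) x) (at x within {-1..1})) \<and>
      (\<forall>j\<le>k. continuous_on {-1..1} (D j))}"

definition ref_integrator :: "nat \<Rightarrow> ((real \<Rightarrow> real) \<Rightarrow> real) \<Rightarrow> bool" where
  "ref_integrator k I \<longleftrightarrow>
     (\<forall>f\<in>Ck k. \<forall>g\<in>Ck k. \<forall>a b. I (\<lambda>x. a * f x + b * g x) = a * I f + b * I g) \<and>
     (\<forall>f\<in>Ck k. \<forall>g\<in>Ck k. (\<forall>x\<in>{-1..1}. f x = g x) \<longrightarrow> I f = I g)"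

text \<open>Affine map T_n from [-1,1] onto [a,b] (a = t_{n-1}, b = t_n) and its inverse.\<close>
definition Tmap :: "real \<Rightarrow> real \<Rightarrow> real \<Rightarrow> real" where
  "Tmap a b x = (b + a) / 2 + (b - a) / 2 * x"

definition Tinv :: "real \<Rightarrow> real \<Rightarrow> real \<Rightarrow> real" where
  "Tinv a b t = (2 * t - a - b) / (b - a)"

definition local_int ::
  "((real \<Rightarrow> real) \<Rightarrow> real) \<Rightarrow> real \<Rightarrow> real \<Rightarrow> (real \<Rightarrow> 'a::euclidean_space) \<Rightarrow> 'a" where
  "local_int I a b f = (\<Sum>e\<in>Basis. scaleR ((b - a) / 2 * I (\<lambda>x. f (Tmap a b x) \<bullet> e)) e)"

text \<open>Real polynomials of degree < m (so m = r gives P_{r-1}, and P_{-1} = {0}).\<close>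
definition real_polys_lt :: "nat \<Rightarrow> (real \<Rightarrow> real) set" where
  "real_polys_lt m = {f. \<exists>c. f = (\<lambda>x. \<Sum>j<m. c j * x ^ j)}"

definition vec_polys_le :: "nat \<Rightarrow> (real \<Rightarrow> 'a::real_vector) set" where
  "vec_polys_le m = {f. \<exists>c. f = (\<lambda>x. \<Sum>j\<le>m. x ^ j *\<^sub>R c j)}"

definition A1_k0 :: "((real \<Rightarrow> real) \<Rightarrow> real) \<Rightarrow> nat \<Rightarrow> bool" where
  "A1_k0 I r \<longleftrightarrow>
     (\<forall>\<psi>\<in>real_polys_lt r.
        (\<forall>\<phi>\<in>real_polys_lt r. I (\<lambda>x. (1 + x) * \<psi> x * \<phi> x) = 0) \<longrightarrow> (\<forall>x\<in>{-1..1}. \<psi> x = 0))"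

end

(* Pull everything back to [-1,1] by T_n. Writing p = phi o T_n, the chain rule gives
   (tau_n/2) phi'(T_n x) = p'(x), so the factor tau_n/2 in I_n is absorbed and the right-hand
   side becomes I[(1+x)^i p'] + delta_{0,i} p(-1), independent of the mesh. This is an injective
   linear function of the coefficients of p: the equations for i >= 1 say that (1+x) p' is
   I-orthogonal to P_{r-1}, so p' = 0 by (A1), and then p(-1) = 0 from i = 0. An injective square
   system is bounded below, the coefficients of p bound max |p| on [-1,1], and the vector-valued
   case follows componentwise. *)

theory Submission
  imports Defs "HOL-Computational_Algebra.Polynomial" "Jordan_Normal_Form.Determinant"
begin

no_notation Matrix.scalar_prod (infix "\<bullet>" 70)
no_notation vec_nth (infixl "$" 90)

lemma real_polynomial_function_in_Ck:
  assumes "real_polynomial_function f"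
  shows "f \<in> Ck k"
proof -
  obtain der where der: "\<And>g. real_polynomial_function g \<Longrightarrow>
      real_polynomial_function (der g) \<and> (\<forall>x. (g has_real_derivative der g x) (at x))"
    using has_real_derivative_polynomial_function by metis
  have poly_der: "real_polynomial_function ((der ^^ j) f)" for j
    by (induction j) (simp_all add: der assms)
  show ?thesis
    unfolding Ck_def
    by (intro CollectI exI[of _ "\<lambda>j. (der ^^ j) f"])
      (auto simp: der poly_der has_field_derivative_at_within continuous_at_imp_continuous_on
        continuous_real_polymonial_function)
qed

lemma real_polynomial_function_id: "real_polynomial_function (\<lambda>x::real. x)"
  using real_polynomial_function.intros(1)[OF bounded_linear_ident] .

lemma ref_integrator_linear:
  assumes "ref_integrator k I" and "real_polynomial_function f" and "real_polynomial_function g"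
  shows "I (\<lambda>x. a * f x + b * g x) = a * I f + b * I g"
  using assms real_polynomial_function_in_Ck unfolding ref_integrator_def by blast

lemma ref_integrator_cmult:
  assumes "ref_integrator k I" and "real_polynomial_function f"
  shows "I (\<lambda>x. c * f x) = c * I f"
  using ref_integrator_linear[OF assms assms(2), of c 0] by simp

lemma ref_integrator_sum:
  assumes I: "ref_integrator k I" and "finite S"
    and f: "\<And>j. j \<in> S \<Longrightarrow> real_polynomial_function (f j)"
  shows "I (\<lambda>x. \<Sum>j\<in>S. c j * f j x) = (\<Sum>j\<in>S. c j * I (f j))"
  using \<open>finite S\<close> f
proof (induction S rule: finite_induct)
  case empty
  show ?case
    using ref_integrator_cmult[OF I real_polynomial_function.intros(2), of 0 0] by simp
next
  case (insert j S)
  have "real_polynomial_function (\<lambda>x. \<Sum>j\<in>S. c j * f j x)"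
    using insert by (intro real_polynomial_function_sum) auto
  then have "I (\<lambda>x. c j * f j x + 1 * (\<Sum>j\<in>S. c j * f j x))
      = c j * I (f j) + 1 * I (\<lambda>x. \<Sum>j\<in>S. c j * f j x)"
    using insert.prems by (intro ref_integrator_linear[OF I]) auto
  then show ?case
    using insert by simp
qed

lemma real_polys_lt_real_polynomial_function:
  "\<psi> \<in> real_polys_lt r \<Longrightarrow> real_polynomial_function \<psi>"
  unfolding real_polys_lt_def
  by (auto intro!: real_polynomial_function_sum real_polynomial_function.intros(2,4)
      real_polynomial_function_power real_polynomial_function_id)

lemma A1_k0_eq_0_if_moments_vanish:
  assumes I: "ref_integrator k I" and A1: "A1_k0 I r" and \<psi>: "\<psi> \<in> real_polys_lt r"
    and moments: "\<And>i. 1 \<le> i \<Longrightarrow> i \<le> r \<Longrightarrow> I (\<lambda>x. (1 + x) ^ i * \<psi> x) = 0"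
    and x: "x \<in> {-1..1}"
  shows "\<psi> x = 0"
proof -
  have poly_\<psi>: "real_polynomial_function \<psi>"
    using \<psi> by (rule real_polys_lt_real_polynomial_function)
  have monomial: "I (\<lambda>x. (1 + x) * \<psi> x * x ^ m) = 0" if "m < r" for m
  proof -
    have "(1 + x) * \<psi> x * x ^ m
        = (\<Sum>i\<le>m. (of_nat (m choose i) * (-1) ^ (m - i)) * ((1 + x) ^ Suc i * \<psi> x))" for x :: real
      using binomial_ring[of "1 + x" "-1" m]
      by (simp add: sum_distrib_left sum_distrib_right algebra_simps)
    then have "I (\<lambda>x. (1 + x) * \<psi> x * x ^ m)
        = (\<Sum>i\<le>m. (of_nat (m choose i) * (-1) ^ (m - i)) * I (\<lambda>x. (1 + x) ^ Suc i * \<psi> x))"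
      by (simp add: ref_integrator_sum[OF I] poly_\<psi> real_polynomial_function_power
          real_polynomial_function.intros(2-4) real_polynomial_function_id)
    also have "\<dots> = 0"
      using moments[of "Suc _"] that by (intro sum.neutral ballI) (simp del: power_Suc)
    finally show ?thesis .
  qed
  have "I (\<lambda>x. (1 + x) * \<psi> x * \<phi> x) = 0" if \<phi>: "\<phi> \<in> real_polys_lt r" for \<phi>
  proof -
    obtain c where c: "\<phi> = (\<lambda>x. \<Sum>j<r. c j * x ^ j)"
      using \<phi> unfolding real_polys_lt_def by blast
    have "I (\<lambda>x. (1 + x) * \<psi> x * \<phi> x) = I (\<lambda>x. \<Sum>j<r. c j * ((1 + x) * \<psi> x * x ^ j))"
      unfolding c by (simp add: sum_distrib_left algebra_simps)
    also have "\<dots> = (\<Sum>j<r. c j * I (\<lambda>x. (1 + x) * \<psi> x * x ^ j))"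
      by (simp add: ref_integrator_sum[OF I] poly_\<psi> real_polynomial_function_power
          real_polynomial_function.intros(2-4) real_polynomial_function_id)
    also have "\<dots> = 0"
      using monomial by simp
    finally show ?thesis .
  qed
  then show ?thesis
    using A1 \<psi> x unfolding A1_k0_def by blast
qed

lemma coeff_eq_0_if_vanishes_on_interval:
  fixes c :: "nat \<Rightarrow> real"
  assumes "\<And>x. x \<in> {-1..1} \<Longrightarrow> (\<Sum>j<n. c j * x ^ j) = 0" and "i < n"
  shows "c i = 0"
proof -
  obtain m where n: "n = Suc m"
    using \<open>i < n\<close> by (cases n) auto
  have "infinite {-1..1::real}"
    by (simp add: infinite_Icc)
  moreover have "{-1..1::real} \<subseteq> {x. (\<Sum>j\<le>m. c j * x ^ j) = 0}"
    using assms(1) by (auto simp: n lessThan_Suc_atMost)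
  ultimately have "infinite {x. (\<Sum>j\<le>m. c j * x ^ j) = 0}"
    using finite_subset by blast
  then have "\<forall>j\<le>m. c j = 0"
    using polyfun_finite_roots by blast
  then show ?thesis
    using \<open>i < n\<close> n by simp
qed

(* Applied to the coefficients d of p = (\<lambda>x. \<Sum>j\<le>r. d j * x ^ j), row i gives
   I[(1+x)^i p'] + delta_{0,i} p(-1). *)
definition stab_matrix :: "((real \<Rightarrow> real) \<Rightarrow> real) \<Rightarrow> nat \<Rightarrow> nat \<Rightarrow> real" where
  "stab_matrix I i j = I (\<lambda>x. (1 + x) ^ i * (of_nat j * x ^ (j - 1))) + (if i = 0 then (-1) ^ j else 0)"

lemma stab_matrix_row:
  assumes I: "ref_integrator k I"
  shows "(\<Sum>j\<le>r. stab_matrix I i j * d j)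
    = I (\<lambda>x. (1 + x) ^ i * (\<Sum>j\<le>r. d j * (of_nat j * x ^ (j - 1))))
      + (if i = 0 then (\<Sum>j\<le>r. d j * (-1) ^ j) else 0)"
proof -
  have "I (\<lambda>x. (1 + x) ^ i * (\<Sum>j\<le>r. d j * (of_nat j * x ^ (j - 1))))
      = I (\<lambda>x. \<Sum>j\<le>r. d j * ((1 + x) ^ i * (of_nat j * x ^ (j - 1))))"
    by (simp add: sum_distrib_left algebra_simps)
  also have "\<dots> = (\<Sum>j\<le>r. d j * I (\<lambda>x. (1 + x) ^ i * (of_nat j * x ^ (j - 1))))"
    by (intro ref_integrator_sum[OF I]) (auto intro!: real_polynomial_function.intros(2-4)
        real_polynomial_function_power real_polynomial_function_id)
  finally show ?thesis
    unfolding stab_matrix_def by (simp add: algebra_simps sum.distrib sum_distrib_left)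
qed

lemma stab_matrix_injective:
  assumes I: "ref_integrator k I" and A1: "A1_k0 I r"
    and kernel: "\<forall>i\<le>r. (\<Sum>j\<le>r. stab_matrix I i j * d j) = 0"
  shows "\<forall>j\<le>r. d j = 0"
proof -
  define \<psi> where "\<psi> x = (\<Sum>j\<le>r. d j * (of_nat j * x ^ (j - 1)))" for x :: real
  have \<psi>_shift: "\<psi> x = (\<Sum>j<r. (of_nat (Suc j) * d (Suc j)) * x ^ j)" for x
    unfolding \<psi>_def sum.atMost_shift by (simp add: algebra_simps)
  then have \<psi>_lt: "\<psi> \<in> real_polys_lt r"
    unfolding real_polys_lt_def by (auto intro!: exI[of _ "\<lambda>j. of_nat (Suc j) * d (Suc j)"])
  have moments: "I (\<lambda>x. (1 + x) ^ i * \<psi> x) = 0" if "1 \<le> i" "i \<le> r" for i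
    using kernel stab_matrix_row[OF I, where r=r and i=i and d=d] that by (simp add: \<psi>_def)
  have \<psi>_vanish: "\<psi> x = 0" if "x \<in> {-1..1}" for x
    using A1_k0_eq_0_if_moments_vanish[OF I A1 \<psi>_lt moments that] .
  have d_Suc: "of_nat (Suc j) * d (Suc j) = 0" if "j < r" for j
    by (rule coeff_eq_0_if_vanishes_on_interval[OF _ that]) (use \<psi>_vanish \<psi>_shift in auto)
  then have \<psi>_0: "\<psi> = (\<lambda>x. 0)"
    using \<psi>_shift by auto
  have "I (\<lambda>x. (1 + x) ^ 0 * \<psi> x) + (\<Sum>j\<le>r. d j * (-1) ^ j) = 0"
    using kernel stab_matrix_row[OF I, where r=r and i=0 and d=d] unfolding \<psi>_def by simp
  moreover have "(\<Sum>j\<le>r. d j * (-1) ^ j) = d 0"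
    using d_Suc by (simp add: sum.atMost_shift)
  moreover have "I (\<lambda>x. 0) = 0"
    using ref_integrator_cmult[OF I real_polynomial_function.intros(2), of 0 0] by simp
  ultimately have d_0: "d 0 = 0"
    using \<psi>_0 by simp
  show ?thesis
  proof (intro allI impI)
    fix j
    assume "j \<le> r"
    then show "d j = 0"
      using d_0 d_Suc[of "j - 1"] by (cases j) auto
  qed
qed

lemma mat_mult_vec_atMost:
  "mat (Suc r) (Suc r) (\<lambda>(i, j). M i j) *\<^sub>v vec (Suc r) d = vec (Suc r) (\<lambda>i. \<Sum>k\<le>r. M i k * d k)"
proof (rule eq_vecI)
  fix i
  assume "i < dim_vec (vec (Suc r) (\<lambda>i. \<Sum>k\<le>r. M i k * d k))"
  then have "i < Suc r"
    by simp
  then have "(mat (Suc r) (Suc r) (\<lambda>(i, j). M i j) *\<^sub>v vec (Suc r) d) $ i = (\<Sum>k\<in>{0..<Suc r}. M i k * d k)"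
    unfolding mult_mat_vec_def scalar_prod_def by simp
  with \<open>i < Suc r\<close> show "(mat (Suc r) (Suc r) (\<lambda>(i, j). M i j) *\<^sub>v vec (Suc r) d) $ i
      = vec (Suc r) (\<lambda>i. \<Sum>k\<le>r. M i k * d k) $ i"
    unfolding atLeast0LessThan lessThan_Suc_atMost by simp
qed simp

lemma det_square_system_nonzero:
  fixes M :: "nat \<Rightarrow> nat \<Rightarrow> 'a::field"
  assumes inj: "\<And>d. \<forall>i\<le>r. (\<Sum>j\<le>r. M i j * d j) = 0 \<Longrightarrow> \<forall>j\<le>r. d j = 0"
  shows "det (mat (Suc r) (Suc r) (\<lambda>(i, j). M i j)) \<noteq> 0"
proof
  assume "det (mat (Suc r) (Suc r) (\<lambda>(i, j). M i j)) = 0"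
  then obtain v where v: "v \<in> carrier_vec (Suc r)" "v \<noteq> 0\<^sub>v (Suc r)"
      "mat (Suc r) (Suc r) (\<lambda>(i, j). M i j) *\<^sub>v v = 0\<^sub>v (Suc r)"
    using det_0_iff_vec_prod_zero_field[OF mat_carrier] by auto
  have "vec (Suc r) (\<lambda>j. v $ j) = v"
    using v(1) by auto
  then have kernel: "vec (Suc r) (\<lambda>i. \<Sum>k\<le>r. M i k * v $ k) = 0\<^sub>v (Suc r)"
    using v(3) mat_mult_vec_atMost[of r M "\<lambda>j. v $ j"] by simp
  have "\<forall>i\<le>r. (\<Sum>k\<le>r. M i k * v $ k) = 0"
  proof (intro allI impI)
    fix i
    assume "i \<le> r"
    then show "(\<Sum>k\<le>r. M i k * v $ k) = 0"
      using arg_cong[OF kernel, of "\<lambda>u. u $ i"] by simp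
  qed
  then have "\<forall>j\<le>r. v $ j = 0"
    by (rule inj)
  then have "v = 0\<^sub>v (Suc r)"
    using v(1) by (intro eq_vecI) auto
  with v(2) show False ..
qed

lemma square_system_left_inverse:
  fixes M :: "nat \<Rightarrow> nat \<Rightarrow> 'a::field"
  assumes inj: "\<And>d. \<forall>i\<le>r. (\<Sum>j\<le>r. M i j * d j) = 0 \<Longrightarrow> \<forall>j\<le>r. d j = 0"
  obtains B where "\<And>d j. j \<le> r \<Longrightarrow> d j = (\<Sum>i\<le>r. B j i * (\<Sum>k\<le>r. M i k * d k))"
proof -
  define A where "A = mat (Suc r) (Suc r) (\<lambda>(i, j). M i j)"
  have A: "A \<in> carrier_mat (Suc r) (Suc r)"
    unfolding A_def by auto
  obtain B where BA: "B * A = 1\<^sub>m (Suc r)" and B: "B \<in> carrier_mat (Suc r) (Suc r)"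
    using det_non_zero_imp_unit[OF A det_square_system_nonzero[where M=M, OF inj, folded A_def], of "()"]
    unfolding Units_def ring_mat_def by auto
  show ?thesis
  proof (rule that[of "\<lambda>j i. B $$ (j, i)"])
    fix d j
    assume j: "j \<le> r"
    have "vec (Suc r) d = (B * A) *\<^sub>v vec (Suc r) d"
      using BA by simp
    also have "\<dots> = B *\<^sub>v vec (Suc r) (\<lambda>i. \<Sum>k\<le>r. M i k * d k)"
      using assoc_mult_mat_vec[OF B A, of "vec (Suc r) d"] mat_mult_vec_atMost[of r M d]
      unfolding A_def by simp
    finally have "vec (Suc r) d $ j = (B *\<^sub>v vec (Suc r) (\<lambda>i. \<Sum>k\<le>r. M i k * d k)) $ j"
      by simp
    then show "d j = (\<Sum>i\<le>r. B $$ (j, i) * (\<Sum>k\<le>r. M i k * d k))"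
      using j B
      by (auto simp: mult_mat_vec_def scalar_prod_def atLeast0LessThan lessThan_Suc_atMost)
  qed
qed

lemma sum_abs_bounded_by_left_inverse:
  fixes M B :: "nat \<Rightarrow> nat \<Rightarrow> real"
  assumes inverse: "\<And>d j. j \<le> r \<Longrightarrow> d j = (\<Sum>i\<le>r. B j i * (\<Sum>k\<le>r. M i k * d k))"
  obtains C where "C > 0" "\<And>d. (\<Sum>j\<le>r. \<bar>d j\<bar>) \<le> C * (\<Sum>i\<le>r. \<bar>\<Sum>k\<le>r. M i k * d k\<bar>)"
proof
  define C where "C = 1 + (\<Sum>j\<le>r. \<Sum>i\<le>r. \<bar>B j i\<bar>)"
  show "C > 0"
    unfolding C_def by (simp add: add_pos_nonneg sum_nonneg)
  fix d :: "nat \<Rightarrow> real"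
  define w where "w i = (\<Sum>k\<le>r. M i k * d k)" for i
  define W where "W = (\<Sum>i\<le>r. \<bar>w i\<bar>)"
  have w_le: "\<bar>w i\<bar> \<le> W" if "i \<le> r" for i
    unfolding W_def using that by (intro member_le_sum) auto
  have "(\<Sum>j\<le>r. \<bar>d j\<bar>) \<le> (\<Sum>j\<le>r. \<Sum>i\<le>r. \<bar>B j i\<bar> * W)"
  proof (rule sum_mono)
    fix j
    assume "j \<in> {..r}"
    then have "\<bar>d j\<bar> = \<bar>\<Sum>i\<le>r. B j i * w i\<bar>"
      using inverse unfolding w_def by simp
    also have "\<dots> \<le> (\<Sum>i\<le>r. \<bar>B j i\<bar> * \<bar>w i\<bar>)"
      using sum_abs[of "\<lambda>i. B j i * w i"] by (simp add: abs_mult)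
    also have "\<dots> \<le> (\<Sum>i\<le>r. \<bar>B j i\<bar> * W)"
      using w_le by (intro sum_mono mult_left_mono) auto
    finally show "\<bar>d j\<bar> \<le> (\<Sum>i\<le>r. \<bar>B j i\<bar> * W)" .
  qed
  also have "\<dots> = (C - 1) * W"
    unfolding C_def by (simp add: sum_distrib_right)
  also have "\<dots> \<le> C * W"
    unfolding W_def by (simp add: algebra_simps sum_nonneg)
  finally show "(\<Sum>j\<le>r. \<bar>d j\<bar>) \<le> C * (\<Sum>i\<le>r. \<bar>\<Sum>k\<le>r. M i k * d k\<bar>)"
    unfolding W_def w_def .
qed

lemma stab_matrix_bound:
  assumes I: "ref_integrator k I" and A1: "A1_k0 I r"
  obtains C where "C > 0" "\<And>d x. x \<in> {-1..1} \<Longrightarrow>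
      \<bar>\<Sum>j\<le>r. d j * x ^ j\<bar> \<le> C * (\<Sum>i\<le>r. \<bar>\<Sum>j\<le>r. stab_matrix I i j * d j\<bar>)"
proof -
  obtain B where B: "\<And>d j. j \<le> r \<Longrightarrow> d j = (\<Sum>i\<le>r. B j i * (\<Sum>k\<le>r. stab_matrix I i k * d k))"
    using square_system_left_inverse[OF stab_matrix_injective[OF I A1]] by blast
  obtain C where C: "C > 0"
    "\<And>d. (\<Sum>j\<le>r. \<bar>d j\<bar>) \<le> C * (\<Sum>i\<le>r. \<bar>\<Sum>k\<le>r. stab_matrix I i k * d k\<bar>)"
    using sum_abs_bounded_by_left_inverse[OF B] by blast
  have "\<bar>\<Sum>j\<le>r. d j * x ^ j\<bar> \<le> C * (\<Sum>i\<le>r. \<bar>\<Sum>j\<le>r. stab_matrix I i j * d j\<bar>)"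
    if "x \<in> {-1..1}" for d x
  proof -
    have "\<bar>\<Sum>j\<le>r. d j * x ^ j\<bar> \<le> (\<Sum>j\<le>r. \<bar>d j\<bar> * \<bar>x\<bar> ^ j)"
      using sum_abs[of "\<lambda>j. d j * x ^ j"] by (simp add: abs_mult power_abs)
    also have "\<dots> \<le> (\<Sum>j\<le>r. \<bar>d j\<bar>)"
      using that by (intro sum_mono mult_right_le_one_le power_le_one) auto
    finally show ?thesis
      using C(2) by (rule order.trans)
  qed
  with C(1) show ?thesis
    by (rule that)
qed

lemma sum_power_affine_coeffs:
  fixes c :: "nat \<Rightarrow> real"
  obtains d where "\<And>x. (\<Sum>j\<le>r. c j * (\<alpha> + \<beta> * x) ^ j) = (\<Sum>k\<le>r. d k * x ^ k)"
proof -
  define p where "p = (\<Sum>j\<le>r. Polynomial.smult (c j) ([:\<alpha>, \<beta>:] ^ j))"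
  have "degree p \<le> r"
    unfolding p_def
    by (intro degree_sum_le order.trans[OF degree_smult_le] order.trans[OF degree_power_le]) auto
  then have p_monoms: "p = (\<Sum>k\<le>r. monom (coeff p k) k)"
    by (simp add: poly_as_sum_of_monoms')
  have "(\<Sum>j\<le>r. c j * (\<alpha> + \<beta> * x) ^ j) = (\<Sum>k\<le>r. coeff p k * x ^ k)" for x
  proof -
    have "(\<Sum>j\<le>r. c j * (\<alpha> + \<beta> * x) ^ j) = poly p x"
      unfolding p_def by (simp add: poly_sum algebra_simps)
    also have "\<dots> = (\<Sum>k\<le>r. coeff p k * x ^ k)"
      by (subst p_monoms) (simp add: poly_sum poly_monom)
    finally show ?thesis .
  qed
  then show ?thesis
    by (rule that)
qed

lemma sum_power_affine_deriv:
  fixes c d :: "nat \<Rightarrow> real"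
  assumes "\<And>x. (\<Sum>j\<le>r. c j * (\<alpha> + \<beta> * x) ^ j) = (\<Sum>k\<le>r. d k * x ^ k)"
  shows "\<beta> * (\<Sum>j\<le>r. c j * (of_nat j * (\<alpha> + \<beta> * y) ^ (j - 1)))
    = (\<Sum>k\<le>r. d k * (of_nat k * y ^ (k - 1)))"
proof -
  have "((\<lambda>x. \<Sum>j\<le>r. c j * (\<alpha> + \<beta> * x) ^ j) has_real_derivative
      \<beta> * (\<Sum>j\<le>r. c j * (of_nat j * (\<alpha> + \<beta> * y) ^ (j - 1)))) (at y)"
    by (auto intro!: derivative_eq_intros simp: sum_distrib_left algebra_simps)
  moreover have "((\<lambda>x. \<Sum>j\<le>r. c j * (\<alpha> + \<beta> * x) ^ j) has_real_derivative
      (\<Sum>k\<le>r. d k * (of_nat k * y ^ (k - 1)))) (at y)"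
    unfolding assms by (auto intro!: derivative_eq_intros simp: algebra_simps)
  ultimately show ?thesis
    by (rule DERIV_unique)
qed

lemma stab_matrix_pullback:
  assumes I: "ref_integrator k I"
    and d: "\<And>x. (\<Sum>j\<le>r. c j * Tmap a b x ^ j) = (\<Sum>k\<le>r. d k * x ^ k)"
  shows "(\<Sum>k\<le>r. stab_matrix I i k * d k)
    = (b - a) / 2 * I (\<lambda>y. (1 + y) ^ i * (\<Sum>j\<le>r. c j * (of_nat j * Tmap a b y ^ (j - 1))))
      + (if i = 0 then (\<Sum>j\<le>r. c j * a ^ j) else 0)"
proof -
  have d': "\<And>x. (\<Sum>j\<le>r. c j * ((b + a) / 2 + (b - a) / 2 * x) ^ j) = (\<Sum>k\<le>r. d k * x ^ k)"
    using d unfolding Tmap_def .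
  have "I (\<lambda>y. (1 + y) ^ i * (\<Sum>k\<le>r. d k * (of_nat k * y ^ (k - 1))))
      = I (\<lambda>y. (b - a) / 2 * ((1 + y) ^ i * (\<Sum>j\<le>r. c j * (of_nat j * Tmap a b y ^ (j - 1)))))"
    unfolding Tmap_def sum_power_affine_deriv[OF d', symmetric] by (simp add: algebra_simps)
  also have "\<dots> = (b - a) / 2 * I (\<lambda>y. (1 + y) ^ i * (\<Sum>j\<le>r. c j * (of_nat j * Tmap a b y ^ (j - 1))))"
    unfolding Tmap_def
    by (intro ref_integrator_cmult[OF I]) (auto intro!: real_polynomial_function.intros(2-4)
        real_polynomial_function_power real_polynomial_function_sum real_polynomial_function_id)
  finally have integral_eq: "I (\<lambda>y. (1 + y) ^ i * (\<Sum>k\<le>r. d k * (of_nat k * y ^ (k - 1)))) = \<dots>" .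
  have "Tmap a b (-1) = a"
    by (simp add: Tmap_def field_simps)
  then have value_eq: "(\<Sum>k\<le>r. d k * (-1) ^ k) = (\<Sum>j\<le>r. c j * a ^ j)"
    using d[of "-1"] by simp
  show ?thesis
    by (simp only: stab_matrix_row[OF I] integral_eq value_eq)
qed

definition stab_functional ::
  "((real \<Rightarrow> real) \<Rightarrow> real) \<Rightarrow> real \<Rightarrow> real \<Rightarrow> (real \<Rightarrow> 'a::euclidean_space) \<Rightarrow> nat \<Rightarrow> 'a" where
  "stab_functional I a b \<phi> i =
     local_int I a b (\<lambda>s. (1 + Tinv a b s) ^ i *\<^sub>R vector_derivative \<phi> (at s))
     + (if i = 0 then Lim (at_right a) \<phi> else 0)"

lemma inner_local_int:
  fixes F :: "real \<Rightarrow> 'a::euclidean_space"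
  assumes "e \<in> Basis"
  shows "local_int I a b F \<bullet> e = (b - a) / 2 * I (\<lambda>x. F (Tmap a b x) \<bullet> e)"
  using assms unfolding local_int_def
  by (simp add: inner_sum_left inner_Basis if_distrib sum.delta cong: if_cong)

lemma inner_stab_functional:
  fixes c :: "nat \<Rightarrow> 'a::euclidean_space"
  assumes "a < b" and e: "e \<in> Basis"
  shows "stab_functional I a b (\<lambda>x. \<Sum>j\<le>r. x ^ j *\<^sub>R c j) i \<bullet> e
    = (b - a) / 2 * I (\<lambda>y. (1 + y) ^ i * (\<Sum>j\<le>r. (c j \<bullet> e) * (of_nat j * Tmap a b y ^ (j - 1))))
      + (if i = 0 then (\<Sum>j\<le>r. (c j \<bullet> e) * a ^ j) else 0)"
proof -
  define \<phi> where "\<phi> x = (\<Sum>j\<le>r. x ^ j *\<^sub>R c j)" for x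
  have "(\<phi> has_vector_derivative (\<Sum>j\<le>r. (of_nat j * s ^ (j - 1)) *\<^sub>R c j)) (at s)" for s
    unfolding \<phi>_def has_vector_derivative_def
    by (auto intro!: derivative_eq_intros ext simp: scaleR_sum_right algebra_simps)
  then have derivative: "vector_derivative \<phi> (at s) = (\<Sum>j\<le>r. (of_nat j * s ^ (j - 1)) *\<^sub>R c j)" for s
    by (rule vector_derivative_at)
  have "Lim (at_right a) \<phi> = \<phi> a"
    unfolding \<phi>_def by (rule tendsto_Lim) (auto intro!: tendsto_intros)
  moreover have "Tinv a b (Tmap a b y) = y" for y
    using \<open>a < b\<close> unfolding Tmap_def Tinv_def by (simp add: divide_simps)
  ultimately show ?thesis
    unfolding stab_functional_def \<phi>_def[symmetric] inner_add_left inner_local_int[OF e] derivative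
    by (simp add: \<phi>_def inner_sum_left algebra_simps)
qed

lemma stab_functional_bound:
  fixes \<phi> :: "real \<Rightarrow> 'a::euclidean_space" and C :: real
  assumes I: "ref_integrator k I" and "0 \<le> C"
    and C: "\<And>d x. x \<in> {-1..1} \<Longrightarrow>
      \<bar>\<Sum>j\<le>r. d j * x ^ j\<bar> \<le> C * (\<Sum>i\<le>r. \<bar>\<Sum>j\<le>r. stab_matrix I i j * d j\<bar>)"
    and "a < b" and \<phi>: "\<phi> \<in> vec_polys_le r" and s: "s \<in> {a<..b}"
  shows "norm (\<phi> s) \<le> real DIM('a) * C * (\<Sum>i\<le>r. norm (stab_functional I a b \<phi> i))"
proof -
  obtain c where \<phi>_eq: "\<phi> = (\<lambda>x. \<Sum>j\<le>r. x ^ j *\<^sub>R c j)"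
    using \<phi> unfolding vec_polys_le_def by blast
  define x where "x = Tinv a b s"
  have x: "x \<in> {-1..1}"
    using s \<open>a < b\<close> unfolding x_def Tinv_def by (auto simp: divide_simps)
  have s_eq: "Tmap a b x = s"
    using \<open>a < b\<close> unfolding x_def Tinv_def Tmap_def by (simp add: field_simps)
  have component: "\<bar>\<phi> s \<bullet> e\<bar> \<le> C * (\<Sum>i\<le>r. norm (stab_functional I a b \<phi> i))"
    if e: "e \<in> Basis" for e
  proof -
    obtain d where d: "\<And>x. (\<Sum>j\<le>r. (c j \<bullet> e) * Tmap a b x ^ j) = (\<Sum>k\<le>r. d k * x ^ k)"
      using sum_power_affine_coeffs[where c="\<lambda>j. c j \<bullet> e" and \<alpha>="(b + a) / 2" and \<beta>="(b - a) / 2"]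
      unfolding Tmap_def by blast
    have "\<bar>\<phi> s \<bullet> e\<bar> = \<bar>\<Sum>k\<le>r. d k * x ^ k\<bar>"
      unfolding \<phi>_eq d[symmetric] s_eq by (simp add: inner_sum_left mult.commute)
    also have "\<dots> \<le> C * (\<Sum>i\<le>r. \<bar>stab_functional I a b \<phi> i \<bullet> e\<bar>)"
      using C[OF x, of d] unfolding \<phi>_eq inner_stab_functional[OF \<open>a < b\<close> e]
        stab_matrix_pullback[OF I d] .
    also have "\<dots> \<le> C * (\<Sum>i\<le>r. norm (stab_functional I a b \<phi> i))"
      using \<open>0 \<le> C\<close> e by (intro mult_left_mono sum_mono Basis_le_norm)
    finally show ?thesis .
  qed
  have "norm (\<phi> s) \<le> (\<Sum>e\<in>Basis. \<bar>\<phi> s \<bullet> e\<bar>)"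
    by (rule norm_le_l1)
  also have "\<dots> \<le> (\<Sum>e\<in>(Basis::'a set). C * (\<Sum>i\<le>r. norm (stab_functional I a b \<phi> i)))"
    using component by (rule sum_mono)
  finally show ?thesis
    by simp
qed

theorem mainTheorem5:
  fixes Ihat :: "(real \<Rightarrow> real) \<Rightarrow> real" and r kI :: nat
  assumes "ref_integrator kI Ihat" and "A1_k0 Ihat r"
  shows "\<exists>\<kappa>>0. \<forall>(t::nat \<Rightarrow> real) N n.
     (\<forall>m<N. t m < t (Suc m)) \<and> (\<forall>m\<in>{1..N}. t m - t (m - 1) \<le> 1) \<and> n \<in> {1..N} \<longrightarrow>
     (\<forall>\<phi>::real \<Rightarrow> 'a::euclidean_space. \<phi> \<in> vec_polys_le r \<longrightarrow>
        (SUP s\<in>{t (n - 1)<..t n}. norm (\<phi> s))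
          \<le> \<kappa> * (\<Sum>i\<le>r. norm (local_int Ihat (t (n - 1)) (t n)
                  (\<lambda>s. (1 + Tinv (t (n - 1)) (t n) s) ^ i *\<^sub>R vector_derivative \<phi> (at s))
                + (if i = 0 then Lim (at_right (t (n - 1))) \<phi> else 0))))"
proof -
  obtain C where C: "C > 0" "\<And>d x. x \<in> {-1..1} \<Longrightarrow>
      \<bar>\<Sum>j\<le>r. d j * x ^ j\<bar> \<le> C * (\<Sum>i\<le>r. \<bar>\<Sum>j\<le>r. stab_matrix Ihat i j * d j\<bar>)"
    using stab_matrix_bound[OF assms] by blast
  have "(SUP s\<in>{t (n - 1)<..t n}. norm (\<phi> s))
      \<le> real DIM('a) * C * (\<Sum>i\<le>r. norm (stab_functional Ihat (t (n - 1)) (t n) \<phi> i))"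
    if mesh: "\<forall>m<N. t m < t (Suc m)" "n \<in> {1..N}" and \<phi>: "\<phi> \<in> vec_polys_le r"
    for t :: "nat \<Rightarrow> real" and N n and \<phi> :: "real \<Rightarrow> 'a"
  proof -
    have "t (n - 1) < t n"
      using mesh by (metis Suc_diff_1 Suc_le_lessD atLeastAtMost_iff le_eq_less_or_eq less_one)
    then show ?thesis
      using stab_functional_bound[OF assms(1) less_imp_le[OF C(1)] C(2) _ \<phi>]
      by (intro cSUP_least) auto
  qed
  then show ?thesis
    using C(1) unfolding stab_functional_def by (intro exI[of _ "real DIM('a) * C"]) auto
qed

end
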